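(* Let $d\ge 1$ and let $n$ be an odd positive integer. Let $v_1,\ldots,v_n\in\mathbb{R}^d$ be non-zero vectors with $\|v_i\|_2\le 1$ for all $i$, let $\varepsilon_1,\ldots,\varepsilon_n$ be independent Rademacher random variables, and set $S_n=v_1\varepsilon_1+\cdots+v_n\varepsilon_n$ and $R_{n-1}=\varepsilon_1+\cdots+\varepsilon_{n-1}$. Then $$\mathbb{P}(S_n=0)\le \mathbb{P}\left(\tfrac12 R_{n-1}+\varepsilon_n=0\right).$$
   Context: A Rademacher random variable $\varepsilon$ satisfies $\mathbb{P}(\varepsilon=1)=\mathbb{P}(\varepsilon=-1)=\tfrac12$. *)

theory Defs
  imports "HOL-Analysis.Analysis" "HOL-Probability.Probability"
begin

definition rademacher :: "real pmf" where
  "rademacher = pmf_of_set {-1, 1}"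

text \<open>Joint law of n independent Rademacher variables eps_0, ..., eps_(n-1)
  (indices shifted by one relative to the paper).\<close>
definition rademacher_vec :: "nat \<Rightarrow> (nat \<Rightarrow> real) pmf" where
  "rademacher_vec n = Pi_pmf {..<n} 0 (\<lambda>_. rademacher)"

end

(*
  Choose u with <u, v_i> \<noteq> 0 for all i. Projecting onto u and flipping the indices where
  <u, v_i> < 0 maps the sign patterns with S_n = 0 injectively to the halving sets of the
  positive weights b_i = |<u, v_i>|, i.e. the sets T with sum_{i in T} b_i = sum_{i not in T} b_i.

  These are counted by Katona's circle method. Put the weights on a circle: from each start point
  at most one arc is halving, and for odd n some start point has none, since otherwise mapping
  each point to the end of its halving arc would be a fixed-point-free involution of an odd set.
  So every cyclic order has at most n - 1 halving arcs, and averaging over all n! orders, in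
  which a set of size k appears as an initial segment k! (n - k)! >= m! (m + 1)! times
  (n = 2m + 1), gives at most 2 binom(2m, m + 1) halving sets. That many patterns satisfy
  R_(n-1)/2 + eps_n = 0: the T of size m + 1 inside the first 2m indices, and their complements.
*)
theory Submission
  imports Defs "HOL-Combinatorics.Multiset_Permutations"
begin

lemma even_card_involution:
  assumes "finite D" "g ` D \<subseteq> D" "\<And>x. x \<in> D \<Longrightarrow> g (g x) = x"
    and "\<And>x. x \<in> D \<Longrightarrow> g x \<noteq> x"
  shows "even (card D)"
  using assms
proof (induction "card D" arbitrary: D rule: less_induct)
  case less
  show ?case
  proof (cases "D = {}")
    case False
    then obtain x where x: "x \<in> D" by blast
    define D' where "D' = D - {x, g x}"
    have sub: "{x, g x} \<subseteq> D" using less.prems(2) x by auto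
    have "card {x, g x} = 2" using less.prems(4)[OF x] by simp
    then have "card D = card D' + 2"
      using card_Diff_subset[OF _ sub] card_mono[OF _ sub] less.prems(1) by (simp add: D'_def)
    moreover have "even (card D')"
    proof (rule less.hyps)
      show "card D' < card D" "finite D'"
        using \<open>card D = card D' + 2\<close> less.prems(1) by (auto simp: D'_def)
      show "g ` D' \<subseteq> D'"
      proof
        fix z assume "z \<in> g ` D'"
        then obtain y where y: "y \<in> D" "y \<noteq> x" "y \<noteq> g x" "z = g y"
          by (auto simp: D'_def)
        then have "g y \<noteq> x" "g y \<noteq> g x" using less.prems(3) x by metis+
        then show "z \<in> D'" using less.prems(2) y by (auto simp: D'_def)
      qed
      show "g (g y) = y" "g y \<noteq> y" if "y \<in> D'" for y
        using less.prems(3,4) that by (auto simp: D'_def)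
    qed
    ultimately show ?thesis by simp
  qed simp
qed

lemma ex_not_orthogonal:
  fixes V :: "'a::real_inner set"
  assumes "finite V" "0 \<notin> V"
  shows "\<exists>u. \<forall>v\<in>V. inner u v \<noteq> 0"
  using assms
proof (induction V rule: finite_induct)
  case (insert w V)
  then obtain u where u: "\<forall>v\<in>V. inner u v \<noteq> 0" by auto
  show ?case
  proof (cases "inner u w = 0")
    case True
    \<comment> \<open>perturb u along w, avoiding the finitely many step sizes that create a new zero\<close>
    have "finite (insert 0 ((\<lambda>v. - inner u v / inner w v) ` V))"
      using insert.hyps(1) by simp
    then obtain t :: real where t: "t \<notin> insert 0 ((\<lambda>v. - inner u v / inner w v) ` V)"
      using ex_new_if_finite[OF infinite_UNIV_char_0] by blast
    have "inner (u + t *\<^sub>R w) v \<noteq> 0" if "v \<in> insert w V" for v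
    proof (cases "v = w")
      case True
      then show ?thesis using \<open>inner u w = 0\<close> t insert.prems by (simp add: inner_add_left)
    next
      case False
      then have "v \<in> V" using that by simp
      show ?thesis
      proof (cases "inner w v = 0")
        case True
        then show ?thesis using u \<open>v \<in> V\<close> by (simp add: inner_add_left)
      next
        case False
        have "t \<noteq> - inner u v / inner w v" using t \<open>v \<in> V\<close> by auto
        then show ?thesis using False by (auto simp: inner_add_left field_simps)
      qed
    qed
    then show ?thesis by blast
  qed (use u in auto)
qed simp

lemma sum_if_mem_neg:
  fixes f :: "'b \<Rightarrow> 'a::ring_1"
  assumes "finite I" "S \<subseteq> I"
  shows "(\<Sum>i\<in>I. if i \<in> S then f i else - f i) = 2 * sum f S - sum f I"
proof -
  have "(\<Sum>i\<in>I. if i \<in> S then f i else - f i) = sum f S - sum f (I - S)"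
    using assms by (simp add: sum.If_cases sum_negf Diff_eq Int_absorb1 flip: Int_commute)
  also have "sum f (I - S) = sum f I - sum f S"
    using assms by (simp add: sum_diff finite_subset)
  finally show ?thesis by (simp add: algebra_simps mult_2)
qed

definition arc_sum :: "(nat \<Rightarrow> real) \<Rightarrow> nat \<Rightarrow> nat \<Rightarrow> real" where
  "arc_sum c i k = (\<Sum>j<k. c (i + j))"

lemma arc_sum_add: "arc_sum c i (k + l) = arc_sum c i k + arc_sum c (i + k) l"
  unfolding arc_sum_def by (induction l) (simp_all add: add.assoc)

lemma arc_sum_mod:
  assumes "\<And>j. c (j mod n) = c j"
  shows "arc_sum c (i mod n) k = arc_sum c i k"
  unfolding arc_sum_def by (intro sum.cong refl) (metis assms mod_add_left_eq)

lemma arc_sum_full_circle: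
  assumes "\<And>j. c (j mod n) = c j"
  shows "arc_sum c i n = arc_sum c 0 n"
proof (induction i)
  case (Suc i)
  have "arc_sum c i 1 + arc_sum c (Suc i) n = arc_sum c i n + arc_sum c (i + n) 1"
    using arc_sum_add[of c i 1 n] arc_sum_add[of c i n 1] by simp
  moreover have "c (i + n) = c i" by (metis assms mod_add_self2)
  ultimately show ?case using Suc.IH by (simp add: arc_sum_def)
qed simp

lemma arc_sum_strict_mono:
  assumes "\<And>j. c j > 0" "k < l"
  shows "arc_sum c i k < arc_sum c i l"
proof -
  have "0 < arc_sum c (i + k) (l - k)"
    unfolding arc_sum_def using assms by (intro sum_pos) (auto simp: lessThan_empty_iff)
  then show ?thesis using arc_sum_add[of c i k "l - k"] assms(2) by simp
qed

lemma halving_arc_unique: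
  assumes "\<And>j. c j > 0" "2 * arc_sum c i k = t" "2 * arc_sum c i l = t"
  shows "k = l"
  using arc_sum_strict_mono[where c = c and i = i and k = k and l = l, OF assms(1)]
    arc_sum_strict_mono[where c = c and i = i and k = l and l = k, OF assms(1)] assms(2,3)
  by (cases k l rule: linorder_cases) auto

lemma halving_arc_complement:
  assumes "\<And>j. c (j mod n) = c j" "k \<le> n" "2 * arc_sum c i k = arc_sum c 0 n"
  shows "2 * arc_sum c ((i + k) mod n) (n - k) = arc_sum c 0 n"
proof -
  have "arc_sum c 0 n = arc_sum c i k + arc_sum c (i + k) (n - k)"
    using arc_sum_add[of c i k "n - k"] arc_sum_full_circle[where c = c and n = n, OF assms(1), of i]
      assms(2)
    by simp
  then show ?thesis using assms(3) arc_sum_mod[where c = c and n = n, OF assms(1)] by simp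
qed

lemma ex_start_without_halving_arc:
  assumes "odd n" "\<And>j. c (j mod n) = c j" "\<And>j. c j > 0"
  shows "\<exists>i<n. \<forall>k\<in>{1..<n}. 2 * arc_sum c i k \<noteq> arc_sum c 0 n"
proof (rule ccontr)
  assume "\<not> ?thesis"
  then obtain K where K: "\<And>i. i < n \<Longrightarrow> K i \<in> {1..<n} \<and> 2 * arc_sum c i (K i) = arc_sum c 0 n"
    by metis
  define g where "g i = (i + K i) mod n" for i
  have "n > 0" using assms(1) by presburger
  then have g_lt: "g i < n" for i by (simp add: g_def)
  have K_g: "K (g i) = n - K i" if "i < n" for i
    using halving_arc_unique[OF assms(3) conjunct2[OF K[OF g_lt]]] K[OF that]
      halving_arc_complement[where c = c and n = n, OF assms(2)]
    by (simp add: g_def)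
  have "even (card {..<n})"
  proof (rule even_card_involution)
    show "g ` {..<n} \<subseteq> {..<n}" using g_lt by auto
    show "g (g i) = i" if "i \<in> {..<n}" for i
    proof -
      have "g (g i) = ((i + K i) mod n + (n - K i)) mod n"
        using K_g that by (simp add: g_def[of "g i"]) (simp add: g_def)
      also have "\<dots> = (i + K i + (n - K i)) mod n"
        by (simp add: mod_add_left_eq)
      also have "\<dots> = (i + n) mod n"
        using K[of i] that by simp
      finally show ?thesis using that by simp
    qed
    show "g i \<noteq> i" if "i \<in> {..<n}" for i
      using K[of i] that by (auto simp: g_def mod_if)
  qed simp
  then show False using assms(1) by simp
qed

lemma sum_card_halving_arcs_le:
  assumes "odd n" "\<And>j. c (j mod n) = c j" "\<And>j. c j > 0"
  shows "(\<Sum>i<n. card {k\<in>{1..<n}. 2 * arc_sum c i k = arc_sum c 0 n}) \<le> n - 1"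
proof -
  define A where "A i = {k\<in>{1..<n}. 2 * arc_sum c i k = arc_sum c 0 n}" for i
  obtain i0 where i0: "i0 < n" "A i0 = {}"
    using ex_start_without_halving_arc[where c = c and n = n, OF assms] by (auto simp: A_def)
  have card_A: "card (A i) \<le> 1" for i
    using halving_arc_unique[OF assms(3)] by (auto simp: A_def card_le_Suc0_iff_eq)
  have "(\<Sum>i<n. card (A i)) = card (A i0) + (\<Sum>i\<in>{..<n} - {i0}. card (A i))"
    using i0 by (simp add: sum.remove)
  also have "\<dots> \<le> card ({..<n} - {i0})"
    using i0 sum_bounded_above[of "{..<n} - {i0}" "\<lambda>i. card (A i)" 1] card_A by simp
  also have "\<dots> = n - 1" using i0 by simp
  finally show ?thesis unfolding A_def .
qed

lemma inj_rotate: "inj (rotate i)"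
  by (simp add: rotate_def inj_fn inj_rotate1)

lemma bij_betw_rotate_permutations_of_set:
  "bij_betw (rotate i) (permutations_of_set U) (permutations_of_set U)"
proof -
  have "rotate i ` permutations_of_set U \<subseteq> permutations_of_set U"
    by (auto simp: permutations_of_set_def)
  moreover have "inj_on (rotate i) (permutations_of_set U)"
    using inj_rotate by (rule inj_on_subset) simp
  ultimately show ?thesis
    unfolding bij_betw_def using endo_inj_surj[OF finite_permutations_of_set] by blast
qed

lemma sum_set_take_rotate:
  assumes "distinct xs" "length xs = n" "k \<le> n"
  shows "sum b (set (take k (rotate i xs))) = arc_sum (\<lambda>j. b (xs ! (j mod n))) i k"
proof -
  have "sum b (set (take k (rotate i xs))) = sum_list (map b (take k (rotate i xs)))"
    using assms by (simp add: sum_list_distinct_conv_sum_set)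
  also have "\<dots> = (\<Sum>j<k. b (take k (rotate i xs) ! j))"
    using assms by (simp add: sum_list_sum_nth atLeast0LessThan min_absorb2)
  also have "\<dots> = arc_sum (\<lambda>j. b (xs ! (j mod n))) i k"
    unfolding arc_sum_def by (rule sum.cong) (use assms in \<open>auto simp: nth_rotate\<close>)
  finally show ?thesis .
qed

lemma card_permutations_of_set_prefix:
  assumes "finite U" "T \<subseteq> U"
  shows "card {xs \<in> permutations_of_set U. set (take (card T) xs) = T}
           = fact (card T) * fact (card U - card T)"
proof -
  have "finite T" using assms finite_subset by blast
  let ?append = "\<lambda>(ys, zs). ys @ zs"
  let ?P = "permutations_of_set T \<times> permutations_of_set (U - T)"
  have len: "length ys = card T" if "ys \<in> permutations_of_set T" for ys
    using that length_finite_permutations_of_set by blast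
  have "{xs \<in> permutations_of_set U. set (take (card T) xs) = T} = ?append ` ?P"
  proof (intro equalityI subsetI)
    fix xs assume "xs \<in> {xs \<in> permutations_of_set U. set (take (card T) xs) = T}"
    then have xs: "set xs = U" "distinct xs" "set (take (card T) xs) = T"
      by (auto simp: permutations_of_set_def)
    have "set xs = set (take (card T) xs) \<union> set (drop (card T) xs)"
      by (metis append_take_drop_id set_append)
    moreover have "set (take (card T) xs) \<inter> set (drop (card T) xs) = {}"
      using xs(2) by (simp add: set_take_disj_set_drop_if_distinct)
    ultimately have "set (drop (card T) xs) = U - T"
      using xs by blast
    then have "(take (card T) xs, drop (card T) xs) \<in> ?P"
      using xs by (auto simp: permutations_of_set_def)
    then show "xs \<in> ?append ` ?P"
      by (metis (no_types, lifting) append_take_drop_id case_prod_conv image_eqI)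
  next
    fix xs assume "xs \<in> ?append ` ?P"
    then obtain ys zs where "ys \<in> permutations_of_set T" "zs \<in> permutations_of_set (U - T)"
      and "xs = ys @ zs" by auto
    then show "xs \<in> {xs \<in> permutations_of_set U. set (take (card T) xs) = T}"
      using len assms(2) by (auto simp: permutations_of_set_def)
  qed
  moreover have "inj_on ?append ?P"
    by (rule inj_onI) (auto dest!: len)
  ultimately show ?thesis
    using assms \<open>finite T\<close> by (simp add: card_image card_cartesian_product card_Diff_subset)
qed

lemma card_permutations_of_set_prefix_in:
  assumes "finite U" "F \<subseteq> Pow U" "k \<le> card U"
  shows "card {xs \<in> permutations_of_set U. set (take k xs) \<in> F}
           = card {T \<in> F. card T = k} * (fact k * fact (card U - k))"
proof -
  let ?F = "{T \<in> F. card T = k}"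
  have "{xs \<in> permutations_of_set U. set (take k xs) \<in> F}
          = (\<Union>T\<in>?F. {xs \<in> permutations_of_set U. set (take (card T) xs) = T})"
  proof (intro equalityI subsetI)
    fix xs assume "xs \<in> {xs \<in> permutations_of_set U. set (take k xs) \<in> F}"
    moreover from this have "card (set (take k xs)) = k"
      using assms(1,3) by (auto simp: permutations_of_set_def distinct_card min_absorb2)
    ultimately show "xs \<in> (\<Union>T\<in>?F. {xs \<in> permutations_of_set U. set (take (card T) xs) = T})"
      by auto
  qed auto
  also have "card \<dots> = (\<Sum>T\<in>?F. card {xs \<in> permutations_of_set U. set (take (card T) xs) = T})"
    using assms(1,2) by (intro card_UN_disjoint) (auto intro: finite_subset[of _ "Pow U"])
  also have "\<dots> = (\<Sum>T\<in>?F. fact k * fact (card U - k))"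
  proof (intro sum.cong refl)
    fix T assume "T \<in> ?F"
    then have "T \<subseteq> U" "card T = k" using assms(2) by auto
    then show "card {xs \<in> permutations_of_set U. set (take (card T) xs) = T}
                 = fact k * fact (card U - k)"
      using card_permutations_of_set_prefix[OF assms(1) \<open>T \<subseteq> U\<close>] by (simp only:)
  qed
  finally show ?thesis by simp
qed

lemma middle_fact_product_le:
  assumes "k \<le> 2 * m + 1"
  shows "fact m * fact (Suc m) \<le> (fact k * fact (2 * m + 1 - k) :: nat)"
proof -
  let ?n = "2 * m + 1"
  have "fact m * fact (Suc m) * (?n choose k) \<le> fact m * fact (Suc m) * (?n choose m)"
    using binomial_maximum[of ?n k] by simp
  also have "\<dots> = fact ?n"
    using binomial_fact_lemma[of m ?n] by simp
  also have "\<dots> = fact k * fact (?n - k) * (?n choose k)"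
    using binomial_fact_lemma[OF assms] by simp
  finally show ?thesis
    using assms by simp
qed

lemma card_mult_middle_fact_le_sum_card_prefixes:
  assumes "n = 2 * m + 1" "K \<subseteq> {..n}" "F \<subseteq> Pow {..<n}" "\<And>T. T \<in> F \<Longrightarrow> card T \<in> K"
  shows "card F * (fact m * fact (Suc m))
           \<le> (\<Sum>xs\<in>permutations_of_set {..<n}. card {k\<in>K. set (take k xs) \<in> F})"
proof -
  have "finite K" "finite F"
    using assms(2,3) finite_subset by (auto intro: finite_subset[of _ "Pow {..<n}"])
  have "card F = (\<Sum>k\<in>K. card {T \<in> F. card T = k})"
    using sum.group[of F K card "\<lambda>_. 1::nat"] \<open>finite K\<close> \<open>finite F\<close> assms(4)
    by (simp add: image_subset_iff)
  then have "card F * (fact m * fact (Suc m))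
               = (\<Sum>k\<in>K. card {T \<in> F. card T = k} * (fact m * fact (Suc m)))"
    by (simp add: sum_distrib_right)
  also have "\<dots> \<le> (\<Sum>k\<in>K. card {T \<in> F. card T = k} * (fact k * fact (n - k)))"
    using assms(1,2) middle_fact_product_le by (intro sum_mono mult_le_mono2) auto
  also have "\<dots> = (\<Sum>k\<in>K. card {xs \<in> permutations_of_set {..<n}. set (take k xs) \<in> F})"
    using assms(2,3) card_permutations_of_set_prefix_in[of "{..<n}" F] by (intro sum.cong refl) auto
  also have "\<dots> = (\<Sum>xs\<in>permutations_of_set {..<n}. card {k\<in>K. set (take k xs) \<in> F})"
    using \<open>finite K\<close> by (intro sum_multicount_gen[symmetric]) auto
  finally show ?thesis .
qed

definition halving_sets :: "(nat \<Rightarrow> real) \<Rightarrow> nat \<Rightarrow> nat set set" where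
  "halving_sets b n = {T. T \<subseteq> {..<n} \<and> 2 * sum b T = sum b {..<n}}"

lemma card_mem_halving_sets:
  assumes "T \<in> halving_sets b n" "n > 0" "\<And>i. i < n \<Longrightarrow> b i > 0"
  shows "card T \<in> {1..<n}"
proof -
  have T: "T \<subseteq> {..<n}" "2 * sum b T = sum b {..<n}"
    using assms(1) by (auto simp: halving_sets_def)
  have "sum b {..<n} > 0"
    using assms(2,3) by (intro sum_pos) auto
  then have "T \<noteq> {}" "T \<noteq> {..<n}" using T by auto
  moreover have "card T \<le> n" "finite T"
    using T card_mono[of "{..<n}" T] finite_subset by auto
  ultimately show ?thesis
    using T card_subset_eq[of "{..<n}" T] by (auto simp: Suc_le_eq card_gt_0_iff)
qed

lemma sum_card_halving_prefixes_rotate_le: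
  assumes "odd n" "xs \<in> permutations_of_set {..<n}" "\<And>i. i < n \<Longrightarrow> b i > 0"
  shows "(\<Sum>i<n. card {k\<in>{1..<n}. set (take k (rotate i xs)) \<in> halving_sets b n}) \<le> n - 1"
proof -
  have xs: "distinct xs" "set xs = {..<n}" "length xs = n"
    using assms(2) length_finite_permutations_of_set[OF assms(2)]
    by (auto simp: permutations_of_set_def)
  define c where "c = (\<lambda>j. b (xs ! (j mod n)))"
  have "n > 0" using assms(1) by presburger
  have c_mod: "c (j mod n) = c j" for j by (simp add: c_def)
  have c_pos: "c j > 0" for j
    using assms(3) xs \<open>n > 0\<close> nth_mem[of "j mod n" xs] by (auto simp: c_def)
  have arc: "sum b (set (take k (rotate i xs))) = arc_sum c i k" if "k \<le> n" for i k
    using sum_set_take_rotate[OF xs(1,3) that] by (simp add: c_def)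
  have "sum b {..<n} = arc_sum c 0 n"
    using arc[of n 0] xs(2,3) by simp
  moreover have "set (take k (rotate i xs)) \<subseteq> {..<n}" for i k
    using xs(2) set_take_subset[of k "rotate i xs"] by simp
  ultimately have "set (take k (rotate i xs)) \<in> halving_sets b n \<longleftrightarrow> 2 * arc_sum c i k = arc_sum c 0 n"
    if "k < n" for i k
    using arc[of k i] that by (simp add: halving_sets_def)
  then have "(\<Sum>i<n. card {k\<in>{1..<n}. set (take k (rotate i xs)) \<in> halving_sets b n})
               = (\<Sum>i<n. card {k\<in>{1..<n}. 2 * arc_sum c i k = arc_sum c 0 n})"
    by (intro sum.cong refl arg_cong[where f = card] Collect_cong) auto
  also have "\<dots> \<le> n - 1"
    using sum_card_halving_arcs_le[where c = c and n = n, OF assms(1) c_mod c_pos] .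
  finally show ?thesis .
qed

lemma sum_card_halving_prefixes_le:
  assumes "n = 2 * m + 1" "\<And>i. i < n \<Longrightarrow> b i > 0"
  shows "(\<Sum>xs\<in>permutations_of_set {..<n}. card {k\<in>{1..<n}. set (take k xs) \<in> halving_sets b n})
           \<le> fact (2 * m) * (2 * m)"
proof -
  let ?P = "permutations_of_set {..<n}"
  let ?N = "\<lambda>xs. card {k\<in>{1..<n}. set (take k xs) \<in> halving_sets b n}"
  have "(\<Sum>xs\<in>?P. ?N (rotate i xs)) = sum ?N ?P" for i
    by (rule sum.reindex_bij_betw[OF bij_betw_rotate_permutations_of_set])
  then have "n * sum ?N ?P = (\<Sum>i<n. \<Sum>xs\<in>?P. ?N (rotate i xs))"
    by simp
  also have "\<dots> = (\<Sum>xs\<in>?P. \<Sum>i<n. ?N (rotate i xs))"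
    by (rule sum.swap)
  also have "\<dots> \<le> (\<Sum>xs\<in>?P. n - 1)"
    by (rule sum_mono, rule sum_card_halving_prefixes_rotate_le) (use assms in auto)
  also have "\<dots> = n * (fact (2 * m) * (2 * m))"
    using assms(1) by (simp add: algebra_simps)
  finally have "n * sum ?N ?P \<le> n * (fact (2 * m) * (2 * m))" .
  moreover have "n > 0" using assms(1) by simp
  ultimately show ?thesis
    by simp
qed

lemma two_binomial_middle_mult_fact:
  "2 * (2 * m choose Suc m) * (fact m * fact (Suc m)) = fact (2 * m) * (2 * m :: nat)"
proof (cases m)
  case (Suc l)
  define C where "C = 2 * m choose Suc m"
  have C: "fact (Suc m) * fact l * C = fact (2 * m)"
    using binomial_fact_lemma[of "Suc m" "2 * m"] Suc
    by (simp add: C_def numeral_2_eq_2 del: fact_Suc)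
  have "fact m = m * (fact l :: nat)"
    using Suc by simp
  then have "2 * C * (fact m * fact (Suc m)) = 2 * m * (fact (Suc m) * fact l * C)"
    by (simp only: ac_simps)
  then show ?thesis
    unfolding C_def[symmetric] C by (simp only: ac_simps)
qed simp

lemma card_halving_sets_le:
  assumes "n = 2 * m + 1" "\<And>i. i < n \<Longrightarrow> b i > 0"
  shows "card (halving_sets b n) \<le> 2 * (2 * m choose Suc m)"
proof -
  have "card (halving_sets b n) * (fact m * fact (Suc m))
          \<le> (\<Sum>xs\<in>permutations_of_set {..<n}. card {k\<in>{1..<n}. set (take k xs) \<in> halving_sets b n})"
    using assms card_mem_halving_sets[of _ b n]
    by (intro card_mult_middle_fact_le_sum_card_prefixes) (auto simp: halving_sets_def)
  also have "\<dots> \<le> fact (2 * m) * (2 * m)"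
    using sum_card_halving_prefixes_le[OF assms] .
  also have "\<dots> = 2 * (2 * m choose Suc m) * (fact m * fact (Suc m))"
    by (rule two_binomial_middle_mult_fact[symmetric])
  finally show ?thesis
    by (rule mult_right_le_imp_le) simp
qed

definition sign_pattern :: "nat \<Rightarrow> nat set \<Rightarrow> nat \<Rightarrow> real" where
  "sign_pattern n T i = (if i < n then if i \<in> T then 1 else -1 else 0)"

lemma bij_betw_sign_pattern:
  "bij_betw (sign_pattern n) (Pow {..<n}) (PiE_dflt {..<n} 0 (\<lambda>_. {-1, 1}))"
proof (rule bij_betwI')
  fix e :: "nat \<Rightarrow> real" assume "e \<in> PiE_dflt {..<n} 0 (\<lambda>_. {-1, 1})"
  then have "e = sign_pattern n {i. i < n \<and> e i = 1}"
    by (auto simp: sign_pattern_def PiE_dflt_def fun_eq_iff)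
  then show "\<exists>T\<in>Pow {..<n}. e = sign_pattern n T" by blast
qed (auto simp: sign_pattern_def PiE_dflt_def fun_eq_iff)

lemma prob_rademacher_vec:
  "measure_pmf.prob (rademacher_vec n) X = card {T \<in> Pow {..<n}. sign_pattern n T \<in> X} / 2 ^ n"
proof -
  let ?E = "PiE_dflt {..<n} 0 (\<lambda>_. {-1, 1::real})"
  have "rademacher_vec n = pmf_of_set ?E"
    unfolding rademacher_vec_def rademacher_def by (rule Pi_pmf_of_set) auto
  moreover have card_E: "card ?E = 2 ^ n"
    using bij_betw_same_card[OF bij_betw_sign_pattern[of n]] by (simp add: card_Pow)
  moreover have "card (?E \<inter> X) = card {T \<in> Pow {..<n}. sign_pattern n T \<in> X}"
    using bij_betw_sign_pattern[of n]
    by (intro bij_betw_same_card[symmetric], rule bij_betw_subset) (auto simp: bij_betw_def)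
  moreover have "?E \<noteq> {}" "finite ?E"
    using card_E card_gt_0_iff[of ?E] by auto
  ultimately show ?thesis
    by (simp add: measure_pmf_of_set)
qed

lemma card_zero_sum_sign_patterns_le:
  fixes v :: "nat \<Rightarrow> 'a::real_inner"
  assumes "\<And>i. i < n \<Longrightarrow> v i \<noteq> 0"
  obtains b where "\<And>i. i < n \<Longrightarrow> b i > 0"
    and "card {T \<in> Pow {..<n}. (\<Sum>i<n. sign_pattern n T i *\<^sub>R v i) = 0} \<le> card (halving_sets b n)"
proof -
  have "0 \<notin> v ` {..<n}" using assms by auto
  then obtain u where "\<forall>w\<in>v ` {..<n}. inner u w \<noteq> 0"
    using ex_not_orthogonal[OF finite_imageI[OF finite_lessThan]] by blast
  then have u: "\<And>i. i < n \<Longrightarrow> inner u (v i) \<noteq> 0" by simp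
  define b where "b i = \<bar>inner u (v i)\<bar>" for i
  define N where "N = {i. i < n \<and> inner u (v i) < 0}"
  define flip where "flip T = (T - N) \<union> (N - T)" for T :: "nat set"
  let ?Z = "{T \<in> Pow {..<n}. (\<Sum>i<n. sign_pattern n T i *\<^sub>R v i) = 0}"
  have img: "flip ` ?Z \<subseteq> halving_sets b n"
  proof
    fix S assume "S \<in> flip ` ?Z"
    then obtain T where T: "T \<subseteq> {..<n}" "(\<Sum>i<n. sign_pattern n T i *\<^sub>R v i) = 0"
      and S: "S = flip T" by auto
    have "S \<subseteq> {..<n}" using T unfolding S flip_def N_def by auto
    have "(\<Sum>i<n. sign_pattern n T i * inner u (v i)) = 0"
      using arg_cong[OF T(2), of "inner u"] by (simp add: inner_sum_right)
    moreover have "sign_pattern n T i * inner u (v i) = (if i \<in> S then b i else - b i)" if "i < n" for i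
      using that unfolding S flip_def sign_pattern_def b_def N_def by auto
    ultimately have "(\<Sum>i<n. if i \<in> S then b i else - b i) = 0" by simp
    then show "S \<in> halving_sets b n"
      using sum_if_mem_neg[OF _ \<open>S \<subseteq> {..<n}\<close>, of b] \<open>S \<subseteq> {..<n}\<close>
      by (simp add: halving_sets_def)
  qed
  have "inj_on flip ?Z"
    unfolding flip_def by (rule inj_onI) blast
  moreover have "finite (halving_sets b n)"
    by (rule finite_subset[of _ "Pow {..<n}"]) (auto simp: halving_sets_def)
  ultimately have "card ?Z \<le> card (halving_sets b n)"
    using img card_inj_on_le by blast
  moreover have "b i > 0" if "i < n" for i
    using u[OF that] by (simp add: b_def)
  ultimately show ?thesis using that by blast
qed

lemma sign_pattern_compl: "sign_pattern n ({..<n} - T) i = - sign_pattern n T i"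
  by (simp add: sign_pattern_def)

lemma card_balanced_sign_patterns_ge:
  assumes "n = 2 * m + 1"
  shows "2 * (2 * m choose Suc m)
           \<le> card {T \<in> Pow {..<n}. (1/2) * (\<Sum>i<n - 1. sign_pattern n T i) + sign_pattern n T (n - 1) = 0}"
proof -
  define B where
    "B = {T \<in> Pow {..<n}. (1/2) * (\<Sum>i<n - 1. sign_pattern n T i) + sign_pattern n T (n - 1) = 0}"
  define R where "R = {T. T \<subseteq> {..<2 * m} \<and> card T = Suc m}"
  let ?compl = "\<lambda>T. {..<n} - T"
  have "R \<subseteq> B"
  proof
    fix T assume "T \<in> R"
    then have T: "T \<subseteq> {..<2 * m}" "card T = Suc m" by (auto simp: R_def)
    have "(\<Sum>i<2 * m. sign_pattern n T i) = (\<Sum>i<2 * m. if i \<in> T then 1 else - 1)"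
      using assms by (intro sum.cong refl) (simp add: sign_pattern_def)
    also have "\<dots> = 2"
      using sum_if_mem_neg[of "{..<2 * m}" T "\<lambda>_. 1::real"] T by simp
    finally have "(\<Sum>i<n - 1. sign_pattern n T i) = 2" using assms by simp
    moreover have "sign_pattern n T (n - 1) = -1"
      using T(1) assms by (auto simp: sign_pattern_def)
    ultimately show "T \<in> B"
      using T(1) assms by (auto simp: B_def)
  qed
  moreover have "?compl ` B \<subseteq> B"
    by (auto simp: B_def sign_pattern_compl sum_negf)
  ultimately have "R \<union> ?compl ` R \<subseteq> B" by blast
  have "inj_on ?compl (Pow {..<n})"
    by (rule inj_onI) (metis Diff_Diff_Int Int_absorb1 PowD)
  then have "inj_on ?compl R"
    by (rule inj_on_subset) (auto simp: R_def assms)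
  moreover have "R \<inter> ?compl ` R = {}"
    using assms by (auto simp: R_def)
  moreover have "finite R"
    by (auto simp: R_def intro: finite_subset[of _ "Pow {..<2 * m}"])
  ultimately have "card (R \<union> ?compl ` R) = 2 * card R"
    by (simp add: card_Un_disjoint card_image)
  also have "card R = 2 * m choose Suc m"
    unfolding R_def by (simp add: n_subsets)
  finally have "2 * (2 * m choose Suc m) = card (R \<union> ?compl ` R)" ..
  also have "\<dots> \<le> card B"
    by (rule card_mono) (use \<open>R \<union> ?compl ` R \<subseteq> B\<close> in \<open>auto simp: B_def\<close>)
  finally show ?thesis unfolding B_def .
qed

theorem theorem4:
  fixes n :: nat and v :: "nat \<Rightarrow> real ^ 'd"
  assumes "odd n"
    and "\<And>i. i < n \<Longrightarrow> v i \<noteq> 0"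
    and "\<And>i. i < n \<Longrightarrow> norm (v i) \<le> 1"
  shows "measure_pmf.prob (rademacher_vec n) {e. (\<Sum>i<n. e i *\<^sub>R v i) = 0}
       \<le> measure_pmf.prob (rademacher_vec n)
            {e. (1/2) * (\<Sum>i<n - 1. e i) + e (n - 1) = 0}"
proof -
  obtain m where n: "n = 2 * m + 1"
    using assms(1) oddE by blast
  obtain b where "\<And>i. i < n \<Longrightarrow> b i > 0"
    and "card {T \<in> Pow {..<n}. (\<Sum>i<n. sign_pattern n T i *\<^sub>R v i) = 0} \<le> card (halving_sets b n)"
    using card_zero_sum_sign_patterns_le assms(2) by blast
  then have "card {T \<in> Pow {..<n}. (\<Sum>i<n. sign_pattern n T i *\<^sub>R v i) = 0}
      \<le> card {T \<in> Pow {..<n}. (1/2) * (\<Sum>i<n - 1. sign_pattern n T i) + sign_pattern n T (n - 1) = 0}"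
    using card_halving_sets_le[OF n] card_balanced_sign_patterns_ge[OF n] by (meson le_trans)
  then show ?thesis
    unfolding prob_rademacher_vec by (simp add: divide_right_mono)
qed

end
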